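(* If $n$ is even, then there exists a line spread $\mathcal F$ of $\mathrm{PG}(2n-1,q)$ such that every line of $\mathcal F$ is scattered with respect to the Desarguesian spread $\mathcal S$, i.e. meets every element of $\mathcal S$ in at most one point.
   Context: Let $q$ be a prime power, $n>1$ an integer, $F=\mathbb F_q\subset M=\mathbb F_{q^n}\subset L=\mathbb F_{q^{2n}}$. Regard $L$ as a $2n$-dimensional $F$-vector space; $\mathrm{PG}(2n-1,q)$ has as points the subspaces $Fz$, $z\in L^*$, and lines the 2-dimensional $F$-subspaces. $\mathcal S$ is the Desarguesian spread of $(n-1)$-subspaces of $\mathrm{PG}(2n-1,q)$ consisting of the projective subspaces determined by the one-dimensional $M$-subspaces $Mz$, $z\in L^*$. A line spread is a set of lines partitioning the point set. A set of points is scattered with respect to a spread if it meets each spread element in at most one point. *)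

theory Defs
  imports Main
begin

definition is_subfield :: "'a::field set \<Rightarrow> bool" where
  "is_subfield K \<longleftrightarrow> 0 \<in> K \<and> 1 \<in> K \<and>
     (\<forall>x\<in>K. \<forall>y\<in>K. x + y \<in> K \<and> x * y \<in> K) \<and>
     (\<forall>x\<in>K. - x \<in> K \<and> inverse x \<in> K)"

definition mults :: "'a::field set \<Rightarrow> 'a \<Rightarrow> 'a set" where
  "mults K z = {c * z | c. c \<in> K}"

text \<open>Points of PG(2n-1,q): the subspaces Fz with z nonzero.\<close>
definition is_point :: "'a::field set \<Rightarrow> 'a set \<Rightarrow> bool" where
  "is_point F P \<longleftrightarrow> (\<exists>z. z \<noteq> 0 \<and> P = mults F z)"

definition is_line :: "'a::field set \<Rightarrow> 'a set \<Rightarrow> bool" where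
  "is_line F l \<longleftrightarrow> (\<exists>x y. l = {a * x + b * y | a b. a \<in> F \<and> b \<in> F} \<and>
       (\<forall>a\<in>F. \<forall>b\<in>F. a * x + b * y = 0 \<longrightarrow> a = 0 \<and> b = 0))"

definition line_spread :: "'a::field set \<Rightarrow> 'a set set \<Rightarrow> bool" where
  "line_spread F S \<longleftrightarrow> (\<forall>l\<in>S. is_line F l) \<and>
     (\<forall>P. is_point F P \<longrightarrow> (\<exists>!l. l \<in> S \<and> P \<subseteq> l))"

definition desarg_elem :: "'a::field set \<Rightarrow> 'a set \<Rightarrow> bool" where
  "desarg_elem M E \<longleftrightarrow> (\<exists>z. z \<noteq> 0 \<and> E = mults M z)"

definition scattered_line :: "'a::field set \<Rightarrow> 'a::field set \<Rightarrow> 'a set \<Rightarrow> bool" where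
  "scattered_line F M l \<longleftrightarrow> (\<forall>E. desarg_elem M E \<longrightarrow>
     (\<forall>P Q. is_point F P \<and> P \<subseteq> l \<and> P \<subseteq> E \<and>
            is_point F Q \<and> Q \<subseteq> l \<and> Q \<subseteq> E \<longrightarrow> P = Q))"

end

theory Submission
  imports Defs "HOL-Number_Theory.Cong" "HOL-Computational_Algebra.Polynomial"
begin

text \<open>An F-linear map T of L with T^2 = t T + s, where X^2 - t X - s is irreducible over F, makes L
  a vector space over F[T], a field with q^2 elements; its one-dimensional subspaces {a v + b T v}
  form a line spread. Such a line meets some Mz in two points exactly when it contains an
  eigenvector of T with eigenvalue in M. Writing L = M \<oplus> M\<theta>, the map
  (x, y) \<mapsto> (a x + y^q, c x^(q^(n-1)) + d y) satisfies T^2 = t T + s for suitable c, d, and its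
  eigenvalues in M are the solutions of m^(q+1) - a m^q + (a - t) m = s. Every m \<in> M - F is a
  solution for exactly one a, and no m \<in> F is, so some a \<in> M leaves T without eigenvalues in M.\<close>

context
  fixes K :: "'a::field set"
  assumes K: "is_subfield K"
begin

lemma subfield_zero: "0 \<in> K" and subfield_one: "1 \<in> K"
  using K by (auto simp: is_subfield_def)

lemma subfield_add: "x \<in> K \<Longrightarrow> y \<in> K \<Longrightarrow> x + y \<in> K"
  and subfield_mult: "x \<in> K \<Longrightarrow> y \<in> K \<Longrightarrow> x * y \<in> K"
  and subfield_uminus: "x \<in> K \<Longrightarrow> - x \<in> K"
  and subfield_inverse: "x \<in> K \<Longrightarrow> inverse x \<in> K"
  using K by (auto simp: is_subfield_def)

lemma subfield_diff: "x \<in> K \<Longrightarrow> y \<in> K \<Longrightarrow> x - y \<in> K"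
  by (metis diff_conv_add_uminus subfield_add subfield_uminus)

lemma subfield_divide: "x \<in> K \<Longrightarrow> y \<in> K \<Longrightarrow> x / y \<in> K"
  by (metis divide_inverse subfield_inverse subfield_mult)

lemma subfield_power: "x \<in> K \<Longrightarrow> x ^ m \<in> K"
  by (induction m) (auto simp: subfield_one subfield_mult)

lemma mem_mults_self: "z \<in> mults K z"
  using subfield_one by (auto simp: mults_def intro: exI[of _ 1])

lemma mults_subset_iff:
  assumes "\<And>c x. c \<in> K \<Longrightarrow> x \<in> X \<Longrightarrow> c * x \<in> X"
  shows "mults K z \<subseteq> X \<longleftrightarrow> z \<in> X"
proof
  show "z \<in> X" if "mults K z \<subseteq> X"
    using that mem_mults_self by blast
  show "mults K z \<subseteq> X" if "z \<in> X"
    using that assms by (auto simp: mults_def)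
qed

lemma mults_mult_eq:
  assumes "a \<in> K" and "a \<noteq> 0"
  shows "mults K (a * z) = mults K z"
proof
  show "mults K (a * z) \<subseteq> mults K z"
    using assms(1) subfield_mult by (auto simp: mults_def mult.assoc[symmetric])
  show "mults K z \<subseteq> mults K (a * z)"
  proof
    fix x
    assume "x \<in> mults K z"
    then obtain c where "c \<in> K" "x = c * z"
      unfolding mults_def by auto
    then have "c / a \<in> K" "x = (c / a) * (a * z)"
      using assms subfield_divide by auto
    then show "x \<in> mults K (a * z)"
      unfolding mults_def by blast
  qed
qed

lemma power_card_subfield:
  assumes "finite K" and x: "x \<in> K"
  shows "x ^ card K = x"
proof (cases "x = 0")
  case True
  then show ?thesis using assms subfield_zero by (auto simp: card_gt_0_iff)
next
  case False
  have "(\<Prod>y\<in>K-{0}. x * y) = (\<Prod>y\<in>K-{0}. y)"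
    by (rule prod.reindex_bij_witness[of _ "\<lambda>y. y / x" "\<lambda>y. x * y"])
       (use False x in \<open>auto simp: subfield_divide subfield_mult\<close>)
  moreover have "(\<Prod>y\<in>K-{0}. x * y) = x ^ card (K - {0}) * (\<Prod>y\<in>K-{0}. y)"
    by (simp add: prod.distrib)
  moreover have "(\<Prod>y\<in>K-{0}. y) \<noteq> 0"
    using \<open>finite K\<close> by simp
  ultimately have "x ^ card (K - {0}) = 1"
    by simp
  moreover have "card K = Suc (card (K - {0}))"
    using \<open>finite K\<close> subfield_zero by (metis card_Suc_Diff1)
  ultimately show ?thesis by simp
qed

lemma power_card_power_subfield:
  assumes "finite K" and "x \<in> K"
  shows "x ^ (card K ^ j) = x"
proof (induction j)
  case (Suc j)
  have "x ^ (card K ^ Suc j) = (x ^ card K) ^ (card K ^ j)"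
    by (simp add: power_mult)
  then show ?case
    using Suc power_card_subfield[OF assms] by simp
qed simp

lemma two_le_card_subfield:
  assumes "finite K"
  shows "2 \<le> card K"
proof -
  have "{0, 1} \<subseteq> K"
    using subfield_zero subfield_one by auto
  then have "card {0::'a, 1} \<le> card K"
    using assms by (intro card_mono)
  then show ?thesis by simp
qed

end

lemma card_roots_power_eq_self:
  assumes "2 \<le> q"
  shows "card {x::'a::field. x ^ q = x} \<le> q"
proof -
  define P :: "'a poly" where "P = monom 1 q + [:0, -1:]"
  have "degree P = q"
    using assms unfolding P_def by (subst degree_add_eq_left) (auto simp: degree_monom_eq)
  moreover have "P \<noteq> 0"
    using \<open>degree P = q\<close> assms by auto
  ultimately have "card {x. poly P x = 0} \<le> q"
    using card_poly_roots_bound[of P] by simp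
  moreover have "poly P x = x ^ q - x" for x
    unfolding P_def by (simp add: poly_monom)
  ultimately show ?thesis by simp
qed

lemma mem_subfield_iff_power_card:
  fixes K :: "'a::{field,finite} set"
  assumes "is_subfield K"
  shows "x \<in> K \<longleftrightarrow> x ^ card K = x"
proof -
  have "K \<subseteq> {x. x ^ card K = x}"
    using power_card_subfield[OF assms] by auto
  moreover have "card {x::'a. x ^ card K = x} \<le> card K"
    using card_roots_power_eq_self two_le_card_subfield[OF assms finite] .
  ultimately have "K = {x. x ^ card K = x}"
    using card_seteq[OF finite] by blast
  then show ?thesis by blast
qed

section \<open>The Frobenius map of a finite subfield\<close>

definition additive_subgroup :: "'a::ab_group_add set \<Rightarrow> bool" where
  "additive_subgroup B \<longleftrightarrow> 0 \<in> B \<and> (\<forall>x\<in>B. \<forall>y\<in>B. x + y \<in> B) \<and> (\<forall>x\<in>B. - x \<in> B)"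

lemma additive_subgroup_of_nat_mult:
  assumes "additive_subgroup B" and "x \<in> B"
  shows "of_nat m * x \<in> B"
  using assms by (induction m) (auto simp: additive_subgroup_def distrib_right)

lemma additive_subgroup_subfield: "is_subfield K \<Longrightarrow> additive_subgroup K"
  by (simp add: additive_subgroup_def subfield_zero subfield_add subfield_uminus)

lemma prime_CHAR_finite: "prime CHAR('a::{field,finite})"
  by (rule prime_CHAR_semidom) (simp add: finite_imp_CHAR_pos)

lemma additive_subgroup_adjoin:
  fixes B :: "'a::{field,finite} set"
  assumes B: "additive_subgroup B" and v: "v \<notin> B"
  defines "p \<equiv> CHAR('a)"
  defines "B' \<equiv> (\<lambda>(b, k). b + of_nat k * v) ` (B \<times> {..<p})"
  shows "additive_subgroup B'" and "card B' = card B * p" and "v \<in> B'" and "B \<subseteq> B'"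
proof -
  have p: "prime p"
    unfolding p_def by (rule prime_CHAR_finite)
  then have "p \<ge> 2"
    by (simp add: prime_ge_2_nat)
  have B0: "0 \<in> B"
    using B by (simp add: additive_subgroup_def)
  have of_nat_mod: "(of_nat (k mod p) :: 'a) = of_nat k" for k
    unfolding p_def by (simp add: of_nat_eq_iff_cong_CHAR cong_def)
  show "v \<in> B'"
    unfolding B'_def using B0 \<open>p \<ge> 2\<close> by (auto intro!: image_eqI[of _ _ "(0, 1)"])
  show "B \<subseteq> B'"
    unfolding B'_def using \<open>p \<ge> 2\<close> by (auto intro!: image_eqI[of _ _ "(b, 0)" for b])
  show "additive_subgroup B'"
    unfolding additive_subgroup_def
  proof (intro conjI ballI)
    show "0 \<in> B'"
      unfolding B'_def using B0 \<open>p \<ge> 2\<close> by (auto intro!: image_eqI[of _ _ "(0, 0)"])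
  next
    fix x y
    assume "x \<in> B'" "y \<in> B'"
    then obtain b k b' k' where x: "x = b + of_nat k * v" "b \<in> B"
      and y: "y = b' + of_nat k' * v" "b' \<in> B"
      unfolding B'_def by auto
    have "x + y = (b + b') + of_nat ((k + k') mod p) * v"
      using x y by (simp add: of_nat_mod algebra_simps)
    moreover have "b + b' \<in> B"
      using B x y by (auto simp: additive_subgroup_def)
    ultimately show "x + y \<in> B'"
      unfolding B'_def using \<open>p \<ge> 2\<close> by (auto intro!: image_eqI[of _ _ "(b + b', (k + k') mod p)"])
  next
    fix x
    assume "x \<in> B'"
    then obtain b k where x: "x = b + of_nat k * v" "b \<in> B" "k < p"
      unfolding B'_def by auto
    have "(of_nat ((p - k) mod p) :: 'a) = of_nat (p - k)"
      by (rule of_nat_mod)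
    also have "\<dots> = - of_nat k"
      using x(3) by (simp add: of_nat_diff p_def)
    finally have "(of_nat ((p - k) mod p) :: 'a) = - of_nat k" .
    then have "- x = (- b) + of_nat ((p - k) mod p) * v"
      using x by simp
    moreover have "- b \<in> B"
      using B x by (auto simp: additive_subgroup_def)
    ultimately show "- x \<in> B'"
      unfolding B'_def using \<open>p \<ge> 2\<close> by (auto intro!: image_eqI[of _ _ "(- b, (p - k) mod p)"])
  qed
  have coeff_eq: "k = k'"
    if eq: "b + of_nat k * v = b' + of_nat k' * v" and "b \<in> B" "b' \<in> B" "k' \<le> k" "k < p"
    for b b' k k'
  proof (rule ccontr)
    assume "k \<noteq> k'"
    then have "coprime (k - k') p"
      using that p by (metis coprime_commute diff_less_eq diff_is_0_eq le_neq_implies_less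
          less_imp_diff_less nat_dvd_not_less not_less prime_imp_coprime zero_less_diff)
    then obtain m where "[(k - k') * m = Suc 0] (mod p)"
      using cong_solve_coprime_nat by blast
    then have inverse: "(of_nat ((k - k') * m) :: 'a) = 1"
      unfolding p_def by (metis One_nat_def of_nat_1 of_nat_eq_iff_cong_CHAR)
    have "of_nat (k - k') * v = b' - b"
      using that by (simp add: of_nat_diff algebra_simps)
    moreover have "b' - b \<in> B"
      using B that unfolding additive_subgroup_def by (metis diff_conv_add_uminus)
    ultimately have "of_nat m * (of_nat (k - k') * v) \<in> B"
      using additive_subgroup_of_nat_mult[OF B] by metis
    then show False
      using inverse v by (simp add: mult.assoc[symmetric] mult.commute[of "of_nat m"])
  qed
  have "inj_on (\<lambda>(b, k). b + of_nat k * v) (B \<times> {..<p})"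
  proof (rule inj_onI, clarsimp)
    fix b k b' k'
    assume "b \<in> B" "b' \<in> B" "k < p" "k' < p" and eq: "b + of_nat k * v = b' + of_nat k' * v"
    then have "k = k'"
      using coeff_eq[of b k b' k'] coeff_eq[of b' k' b k] by (cases "k' \<le> k") auto
    then show "b = b' \<and> k = k'"
      using eq by simp
  qed
  then show "card B' = card B * p"
    unfolding B'_def by (simp add: card_image card_cartesian_product)
qed

lemma card_additive_subgroup_prime_power:
  fixes A :: "'a::{field,finite} set"
  assumes A: "additive_subgroup A"
  shows "\<exists>e. card A = CHAR('a) ^ e"
proof -
  have "\<exists>e. card A = CHAR('a) ^ e"
    if "additive_subgroup B" "B \<subseteq> A" "card B = CHAR('a) ^ j" for B j
    using that
  proof (induction "card A - card B" arbitrary: B j rule: less_induct)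
    case less
    show ?case
    proof (cases "B = A")
      case True
      then show ?thesis using less by auto
    next
      case False
      then obtain v where v: "v \<in> A" "v \<notin> B"
        using less by auto
      define B' where "B' \<equiv> (\<lambda>(b, k). b + of_nat k * v) ` (B \<times> {..<CHAR('a)})"
      note B' = additive_subgroup_adjoin[OF less(2) v(2), folded B'_def]
      have "B' \<subseteq> A"
        unfolding B'_def using less(3) additive_subgroup_of_nat_mult[OF A v(1)] A
        by (auto simp: additive_subgroup_def)
      have "card B > 0"
        using less(2) by (auto simp: additive_subgroup_def card_gt_0_iff)
      moreover have "CHAR('a) \<ge> 2"
        using prime_CHAR_finite[where 'a='a] by (simp add: prime_ge_2_nat)
      ultimately have "card B < card B'"
        using B'(2) by simp
      moreover have "card B' \<le> card A"
        using \<open>B' \<subseteq> A\<close> by (simp add: card_mono)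
      ultimately have "card A - card B' < card A - card B"
        by linarith
      from less(1)[OF this B'(1) \<open>B' \<subseteq> A\<close>, of "Suc j"] show ?thesis
        using B'(2) less(4) by (simp add: mult.commute)
    qed
  qed
  from this[of "{0}" 0] A show ?thesis
    by (auto simp: additive_subgroup_def)
qed

lemma frobenius_add:
  fixes K :: "'a::{field,finite} set" and x y :: 'a
  assumes "is_subfield K"
  shows "(x + y) ^ (card K ^ j) = x ^ (card K ^ j) + y ^ (card K ^ j)"
proof -
  obtain e where "card K = CHAR('a) ^ e"
    using card_additive_subgroup_prime_power[OF additive_subgroup_subfield[OF assms]] by blast
  then show ?thesis
    using freshmans_dream'[OF prime_CHAR_finite[where 'a='a], of "card K ^ j" "e * j"]
    by (simp add: power_mult)
qed

lemma frobenius_diff: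
  fixes K :: "'a::{field,finite} set" and x y :: 'a
  assumes "is_subfield K"
  shows "(x - y) ^ (card K ^ j) = x ^ (card K ^ j) - y ^ (card K ^ j)"
proof -
  have "y ^ (card K ^ j) + (x - y) ^ (card K ^ j) = x ^ (card K ^ j)"
    using frobenius_add[OF assms, of y "x - y"] by simp
  then show ?thesis
    by (simp add: algebra_simps)
qed

section \<open>Line spreads from an operator with irreducible quadratic minimal polynomial\<close>

locale quadratic_operator =
  fixes F M :: "'a::field set" and T :: "'a \<Rightarrow> 'a" and t s :: 'a
  assumes subfield_F: "is_subfield F" and subfield_M: "is_subfield M" and F_subset_M: "F \<subseteq> M"
    and t_in_F: "t \<in> F" and s_in_F: "s \<in> F"
    and T_add: "\<And>u v. T (u + v) = T u + T v"
    and T_scale: "\<And>a u. a \<in> F \<Longrightarrow> T (a * u) = a * T u"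
    and T_square: "\<And>u. T (T u) = t * T u + s * u"
    and irreducible: "\<And>a. a \<in> F \<Longrightarrow> a * a - t * a - s \<noteq> 0"
    and no_eigenvector: "\<And>m u. m \<in> M \<Longrightarrow> u \<noteq> 0 \<Longrightarrow> T u \<noteq> m * u"
begin

definition op_line :: "'a \<Rightarrow> 'a set" where
  "op_line v = {a * v + b * T v | a b. a \<in> F \<and> b \<in> F}"

lemma op_line_independent:
  assumes "v \<noteq> 0" "a \<in> F" "b \<in> F" "a * v + b * T v = 0"
  shows "a = 0 \<and> b = 0"
proof (cases "b = 0")
  case True
  then show ?thesis using assms by simp
next
  case False
  then have "T v = (- a / b) * v"
    using assms by (simp add: field_simps add_eq_0_iff)
  moreover have "- a / b \<in> M"
    using F_subset_M assms subfield_divide[OF subfield_F] subfield_uminus[OF subfield_F] by blast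
  ultimately show ?thesis
    using no_eigenvector assms by blast
qed

lemma is_line_op_line: "v \<noteq> 0 \<Longrightarrow> is_line F (op_line v)"
  unfolding is_line_def op_line_def using op_line_independent by blast

lemma mem_op_line_self: "v \<in> op_line v"
proof -
  have "v = 1 * v + 0 * T v" by simp
  then show ?thesis
    unfolding op_line_def using subfield_zero[OF subfield_F] subfield_one[OF subfield_F] by blast
qed

lemma op_line_scale:
  assumes "c \<in> F" and "x \<in> op_line v"
  shows "c * x \<in> op_line v"
proof -
  obtain a b where "a \<in> F" "b \<in> F" "x = a * v + b * T v"
    using assms(2) unfolding op_line_def by auto
  moreover have "c * (a * v + b * T v) = (c * a) * v + (c * b) * T v"
    by (simp add: algebra_simps)
  ultimately show ?thesis
    using assms(1) subfield_mult[OF subfield_F] unfolding op_line_def by blast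
qed

lemma op_line_subset:
  assumes "w \<in> op_line v"
  shows "op_line w \<subseteq> op_line v"
proof
  obtain \<alpha> \<beta> where ab: "\<alpha> \<in> F" "\<beta> \<in> F" "w = \<alpha> * v + \<beta> * T v"
    using assms unfolding op_line_def by auto
  fix x
  assume "x \<in> op_line w"
  then obtain \<gamma> \<delta> where gd: "\<gamma> \<in> F" "\<delta> \<in> F" "x = \<gamma> * w + \<delta> * T w"
    unfolding op_line_def by auto
  have "x = (\<gamma> * \<alpha> + \<delta> * \<beta> * s) * v + (\<gamma> * \<beta> + \<delta> * \<alpha> + \<delta> * \<beta> * t) * T v"
    using gd ab by (simp add: T_add T_scale T_square algebra_simps)
  moreover have "\<gamma> * \<alpha> + \<delta> * \<beta> * s \<in> F" "\<gamma> * \<beta> + \<delta> * \<alpha> + \<delta> * \<beta> * t \<in> F"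
    using gd ab t_in_F s_in_F by (simp_all add: subfield_add[OF subfield_F] subfield_mult[OF subfield_F])
  ultimately show "x \<in> op_line v"
    unfolding op_line_def by blast
qed

text \<open>The inverse of \<alpha> + \<beta> T is ((\<alpha> + \<beta> t) - \<beta> T) / D with D the norm of \<alpha> + \<beta> T,
  which is nonzero by irreducibility.\<close>
lemma op_line_eq:
  assumes "w \<in> op_line v" "w \<noteq> 0"
  shows "op_line w = op_line v"
proof
  show "op_line w \<subseteq> op_line v"
    using assms(1) by (rule op_line_subset)
  obtain \<alpha> \<beta> where ab: "\<alpha> \<in> F" "\<beta> \<in> F" "w = \<alpha> * v + \<beta> * T v"
    using assms unfolding op_line_def by auto
  define D where "D = \<alpha> * \<alpha> + \<alpha> * \<beta> * t - s * \<beta> * \<beta>"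
  have "D \<noteq> 0"
  proof (cases "\<beta> = 0")
    case True
    then show ?thesis using ab assms(2) by (simp add: D_def)
  next
    case False
    have "- \<alpha> / \<beta> \<in> F"
      using ab subfield_divide[OF subfield_F] subfield_uminus[OF subfield_F] by blast
    then have "(- \<alpha> / \<beta>) * (- \<alpha> / \<beta>) - t * (- \<alpha> / \<beta>) - s \<noteq> 0"
      by (rule irreducible)
    moreover have "D = \<beta> * \<beta> * ((- \<alpha> / \<beta>) * (- \<alpha> / \<beta>) - t * (- \<alpha> / \<beta>) - s)"
      using False by (simp add: D_def field_simps)
    ultimately show ?thesis
      using False by simp
  qed
  have "T w = (\<beta> * s) * v + (\<alpha> + \<beta> * t) * T v"
    using ab by (simp add: T_add T_scale T_square algebra_simps)
  then have Dv: "D * v = (\<alpha> + \<beta> * t) * w + (- \<beta>) * T w"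
    unfolding ab(3) D_def by (simp add: algebra_simps)
  have "v = inverse D * (D * v)"
    using \<open>D \<noteq> 0\<close> by simp
  also note Dv
  finally have "v = ((\<alpha> + \<beta> * t) / D) * w + (- \<beta> / D) * T w"
    by (simp add: divide_inverse algebra_simps)
  moreover have "(\<alpha> + \<beta> * t) / D \<in> F" "- \<beta> / D \<in> F"
    using ab t_in_F s_in_F unfolding D_def
    by (simp_all add: subfield_add[OF subfield_F] subfield_mult[OF subfield_F]
        subfield_diff[OF subfield_F] subfield_divide[OF subfield_F] subfield_uminus[OF subfield_F])
  ultimately have "v \<in> op_line w"
    unfolding op_line_def by blast
  then show "op_line v \<subseteq> op_line w"
    by (rule op_line_subset)
qed

definition op_lines :: "'a set set" where
  "op_lines = {op_line v | v. v \<noteq> 0}"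

lemma line_spread_op_lines: "line_spread F op_lines"
  unfolding line_spread_def
proof (intro conjI allI impI ballI)
  show "is_line F l" if "l \<in> op_lines" for l
    using that is_line_op_line unfolding op_lines_def by auto
next
  fix P
  assume "is_point F P"
  then obtain z where z: "z \<noteq> 0" "P = mults F z"
    unfolding is_point_def by auto
  have sub: "P \<subseteq> op_line v \<longleftrightarrow> z \<in> op_line v" for v
    unfolding z(2) by (rule mults_subset_iff[OF subfield_F]) (rule op_line_scale)
  show "\<exists>!l. l \<in> op_lines \<and> P \<subseteq> l"
  proof (rule ex1I[of _ "op_line z"])
    show "op_line z \<in> op_lines \<and> P \<subseteq> op_line z"
      using z(1) mem_op_line_self sub unfolding op_lines_def by blast
    show "l = op_line z" if l: "l \<in> op_lines \<and> P \<subseteq> l" for l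
    proof -
      obtain v where "l = op_line v" "z \<in> op_line v"
        using l sub unfolding op_lines_def by blast
      then show ?thesis
        using op_line_eq z(1) by simp
    qed
  qed
qed

lemma scattered_line_op_line:
  assumes "v \<noteq> 0"
  shows "scattered_line F M (op_line v)"
  unfolding scattered_line_def
proof (intro allI impI)
  fix E P Q
  assume "desarg_elem M E"
    and PQ: "is_point F P \<and> P \<subseteq> op_line v \<and> P \<subseteq> E \<and> is_point F Q \<and> Q \<subseteq> op_line v \<and> Q \<subseteq> E"
  obtain z where E: "E = mults M z"
    using \<open>desarg_elem M E\<close> unfolding desarg_elem_def by auto
  obtain p p' where p: "p \<noteq> 0" "P = mults F p" and p': "p' \<noteq> 0" "Q = mults F p'"
    using PQ unfolding is_point_def by auto
  have "p \<in> op_line v" "p' \<in> op_line v"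
    using PQ p p' mults_subset_iff[OF subfield_F op_line_scale] by auto
  then have "p' \<in> op_line p"
    using op_line_eq[of p v] p(1) by simp
  then obtain a b where ab: "a \<in> F" "b \<in> F" "p' = a * p + b * T p"
    unfolding op_line_def by blast
  have "p \<in> E" "p' \<in> E"
    using PQ p p' mem_mults_self[OF subfield_F] by auto
  then obtain m m' where m: "m \<in> M" "p = m * z" and m': "m' \<in> M" "p' = m' * z"
    using E unfolding mults_def by auto
  have "b = 0"
  proof (rule ccontr)
    assume "b \<noteq> 0"
    have "p' = (m' / m) * p"
      using m m' p by auto
    then have "T p = ((m' / m - a) / b) * p"
      using ab \<open>b \<noteq> 0\<close> by (simp add: field_simps)
    moreover have "(m' / m - a) / b \<in> M"
      using m m' ab F_subset_M
      by (simp add: subfield_divide[OF subfield_M] subfield_diff[OF subfield_M] subsetD)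
    ultimately show False
      using no_eigenvector p(1) by blast
  qed
  then have "p' = a * p" and "a \<noteq> 0"
    using ab p' by auto
  then show "P = Q"
    using ab(1) p(2) p'(2) by (simp add: mults_mult_eq[OF subfield_F])
qed

lemma exists_scattered_line_spread: "\<exists>S. line_spread F S \<and> (\<forall>l\<in>S. scattered_line F M l)"
  using line_spread_op_lines scattered_line_op_line unfolding op_lines_def by blast

end

section \<open>The parameters of the construction\<close>

text \<open>The map (x, y) \<mapsto> (x + y, -x y) on F \<times> F is not injective, so it misses some pair (t, s);
  then X^2 - t X - s has no root in F, as a root a would give (t, s) = (a + (t - a), - a (t - a)).\<close>
lemma exists_irreducible_quadratic:
  fixes F :: "'a::field set"
  assumes F: "is_subfield F" and "finite F"
  shows "\<exists>t\<in>F. \<exists>s\<in>F. \<forall>a\<in>F. a * a - t * a - s \<noteq> 0"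
proof -
  define h where "h = (\<lambda>(x::'a, y::'a). (x + y, - (x * y)))"
  have "(0, 1) \<in> F \<times> F" "(1, 0) \<in> F \<times> F" "h (0, 1) = h (1, 0)"
    using subfield_zero[OF F] subfield_one[OF F] by (auto simp: h_def)
  then have "\<not> inj_on h (F \<times> F)"
    by (metis inj_on_contraD zero_neq_one prod.inject)
  moreover have "inj_on h (F \<times> F)" if "F \<times> F \<subseteq> h ` (F \<times> F)"
  proof (rule eq_card_imp_inj_on)
    show "finite (F \<times> F)"
      using \<open>finite F\<close> by simp
    then show "card (h ` (F \<times> F)) = card (F \<times> F)"
      using that card_mono card_image_le by (metis finite_imageI le_antisym)
  qed
  ultimately have "\<not> F \<times> F \<subseteq> h ` (F \<times> F)"
    by blast
  then obtain t s where ts: "t \<in> F" "s \<in> F" "(t, s) \<notin> h ` (F \<times> F)"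
    by auto
  have "a * a - t * a - s \<noteq> 0" if "a \<in> F" for a
  proof
    assume "a * a - t * a - s = 0"
    then have "h (a, t - a) = (t, s)"
      by (simp add: h_def algebra_simps)
    moreover have "(a, t - a) \<in> F \<times> F"
      using that ts subfield_diff[OF F] by blast
    ultimately show False
      using ts(3) by (metis image_eqI)
  qed
  then show ?thesis
    using ts by blast
qed

text \<open>For X \<in> M - F the equation is linear in a with nonzero coefficient X - X^q, so each such X
  excludes a single value of a; for X \<in> F it would make X a root of X^2 - t X - s.\<close>
lemma exists_parameter_without_solution:
  fixes F M :: "'a::{field,finite} set"
  assumes F: "is_subfield F" and M: "is_subfield M" and "F \<subseteq> M"
    and "t \<in> F" and "s \<in> F" and irreducible: "\<And>a. a \<in> F \<Longrightarrow> a * a - t * a - s \<noteq> 0"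
  shows "\<exists>a\<in>M. \<forall>X\<in>M. X * X ^ card F - a * X ^ card F + (a - t) * X \<noteq> s"
proof -
  define q where "q = card F"
  define g where "g X = (s - X * X ^ q + t * X) / (X - X ^ q)" for X
  define bad where "bad = {a \<in> M. \<exists>X\<in>M. X * X ^ q - a * X ^ q + (a - t) * X = s}"
  have "bad \<subseteq> g ` (M - F)"
  proof
    fix a
    assume "a \<in> bad"
    then obtain X where X: "X \<in> M" "X * X ^ q - a * X ^ q + (a - t) * X = s"
      unfolding bad_def by blast
    have "X \<notin> F"
    proof
      assume "X \<in> F"
      then have "X ^ q = X"
        unfolding q_def by (rule power_card_subfield[OF F finite])
      then have "X * X - t * X - s = 0"
        using X(2) by (simp add: algebra_simps)
      then show False
        using irreducible \<open>X \<in> F\<close> by blast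
    qed
    then have "X - X ^ q \<noteq> 0"
      using mem_subfield_iff_power_card[OF F] unfolding q_def by auto
    moreover have "a * (X - X ^ q) = s - X * X ^ q + t * X"
      unfolding X(2)[symmetric] by (simp add: algebra_simps)
    ultimately have "a = g X"
      unfolding g_def by (simp add: field_simps)
    then show "a \<in> g ` (M - F)"
      using \<open>X \<notin> F\<close> X(1) by blast
  qed
  then have "card bad \<le> card (M - F)"
    by (meson card_image_le card_mono finite order_trans)
  also have "\<dots> < card M"
    using subfield_zero[OF F] \<open>F \<subseteq> M\<close> by (intro psubset_card_mono) auto
  finally obtain a where "a \<in> M" "a \<notin> bad"
    by (metis card_mono finite subsetI not_le)
  then show ?thesis
    unfolding bad_def q_def by blast
qed

lemma bij_betw_coordinates:
  fixes M :: "'a::{field,finite} set"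
  assumes M: "is_subfield M" and "\<theta> \<notin> M" and "card (UNIV :: 'a set) = card M * card M"
  shows "bij_betw (\<lambda>(x, y). x + y * \<theta>) (M \<times> M) UNIV"
proof -
  have "inj_on (\<lambda>(x, y). x + y * \<theta>) (M \<times> M)"
  proof (rule inj_onI, clarify)
    fix x y x' y'
    assume xy: "x \<in> M" "y \<in> M" "x' \<in> M" "y' \<in> M" and eq: "x + y * \<theta> = x' + y' * \<theta>"
    show "x = x' \<and> y = y'"
    proof (cases "y = y'")
      case True
      then show ?thesis using eq by simp
    next
      case False
      then have "\<theta> = (x' - x) / (y - y')"
        using eq by (simp add: field_simps)
      moreover have "(x' - x) / (y - y') \<in> M"
        using xy by (simp add: subfield_divide[OF M] subfield_diff[OF M])
      ultimately show ?thesis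
        using \<open>\<theta> \<notin> M\<close> by simp
    qed
  qed
  moreover have "card (M \<times> M) = card (UNIV :: 'a set)"
    using assms(3) by (simp add: card_cartesian_product)
  ultimately show ?thesis
    by (simp add: bij_betw_def card_image card_subset_eq)
qed

section \<open>An operator without eigenvectors in M\<close>

locale scattered_construction =
  fixes F M :: "'a::{field,finite} set" and q n :: nat and t s a \<theta> :: 'a
  assumes subfield_F: "is_subfield F" and subfield_M: "is_subfield M" and F_subset_M: "F \<subseteq> M"
    and card_F: "card F = q" and card_M: "card M = q ^ n" and n_gt_1: "1 < n"
    and t_in_F: "t \<in> F" and s_in_F: "s \<in> F"
    and irreducible: "\<And>b. b \<in> F \<Longrightarrow> b * b - t * b - s \<noteq> 0"
    and a_in_M: "a \<in> M"
    and a_no_solution: "\<And>X. X \<in> M \<Longrightarrow> X * X ^ q - a * X ^ q + (a - t) * X \<noteq> s"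
    and coordinates: "bij_betw (\<lambda>(x, y). x + y * \<theta>) (M \<times> M) UNIV"
begin

text \<open>x \<mapsto> x^r inverts the Frobenius x \<mapsto> x^q on M.\<close>
definition r :: nat where "r = q ^ (n - 1)"

lemma power_q_add: "(x + y :: 'a) ^ q = x ^ q + y ^ q"
  and power_q_diff: "(x - y :: 'a) ^ q = x ^ q - y ^ q"
  and power_r_add: "(x + y :: 'a) ^ r = x ^ r + y ^ r"
  and power_r_diff: "(x - y :: 'a) ^ r = x ^ r - y ^ r"
  using frobenius_add[OF subfield_F, of x y 1] frobenius_diff[OF subfield_F, of x y 1]
    frobenius_add[OF subfield_F, of x y "n - 1"] frobenius_diff[OF subfield_F, of x y "n - 1"]
  by (simp_all add: card_F r_def)

lemma power_q_F: "f \<in> F \<Longrightarrow> f ^ q = f"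
  and power_r_F: "f \<in> F \<Longrightarrow> f ^ r = f"
  using power_card_power_subfield[OF subfield_F finite, of f 1]
    power_card_power_subfield[OF subfield_F finite, of f "n - 1"]
  by (simp_all add: card_F r_def)

lemma power_q_r: "x \<in> M \<Longrightarrow> (x ^ q) ^ r = x"
  and power_r_q: "x \<in> M \<Longrightarrow> (x ^ r) ^ q = x"
proof -
  have "q * r = q ^ n"
    using n_gt_1 by (simp add: r_def power_eq_if[of q n])
  moreover have "x \<in> M \<Longrightarrow> x ^ (q ^ n) = x"
    using power_card_subfield[OF subfield_M finite] card_M by simp
  ultimately show "x \<in> M \<Longrightarrow> (x ^ q) ^ r = x" "x \<in> M \<Longrightarrow> (x ^ r) ^ q = x"
    by (simp_all flip: power_mult add: mult.commute)
qed

text \<open>c and d solve c^q = s - a^2 + t a and d^q = t - a; this is what makes T^2 = t T + s.\<close>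
definition c :: 'a where "c = (s - a * a + t * a) ^ r"
definition d :: 'a where "d = (t - a) ^ r"

definition T1 :: "'a \<Rightarrow> 'a \<Rightarrow> 'a" where "T1 x y = a * x + y ^ q"
definition T2 :: "'a \<Rightarrow> 'a \<Rightarrow> 'a" where "T2 x y = c * x ^ r + d * y"

definition xc :: "'a \<Rightarrow> 'a" where "xc z = fst (the_inv_into (M \<times> M) (\<lambda>(x, y). x + y * \<theta>) z)"
definition yc :: "'a \<Rightarrow> 'a" where "yc z = snd (the_inv_into (M \<times> M) (\<lambda>(x, y). x + y * \<theta>) z)"

definition T :: "'a \<Rightarrow> 'a" where "T z = T1 (xc z) (yc z) + T2 (xc z) (yc z) * \<theta>"

lemma xc_in_M: "xc z \<in> M" and yc_in_M: "yc z \<in> M"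
  using bij_betwE[OF bij_betw_the_inv_into[OF coordinates]]
  by (auto simp: xc_def yc_def mem_Times_iff)

lemma coordinates_eq: "z = xc z + yc z * \<theta>"
  using f_the_inv_into_f_bij_betw[OF coordinates, of z]
  by (simp add: xc_def yc_def split: prod.splits)

lemma mult_coordinates: "f * u = (f * xc u) + (f * yc u) * \<theta>"
proof -
  have "f * u = f * (xc u + yc u * \<theta>)"
    by (rule arg_cong[OF coordinates_eq])
  then show ?thesis
    by (simp add: algebra_simps)
qed

lemma coordinates_unique:
  assumes "x \<in> M" "y \<in> M"
  shows "xc (x + y * \<theta>) = x" and "yc (x + y * \<theta>) = y"
  using the_inv_into_f_f[OF bij_betw_imp_inj_on[OF coordinates], of "(x, y)"] assms
  by (simp_all add: xc_def yc_def)

lemma c_in_M: "c \<in> M" and d_in_M: "d \<in> M"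
  using a_in_M t_in_F s_in_F F_subset_M unfolding c_def d_def
  by (auto intro!: subfield_power[OF subfield_M] subfield_add[OF subfield_M]
      subfield_diff[OF subfield_M] subfield_mult[OF subfield_M])

lemma T1_in_M: "x \<in> M \<Longrightarrow> y \<in> M \<Longrightarrow> T1 x y \<in> M"
  and T2_in_M: "x \<in> M \<Longrightarrow> y \<in> M \<Longrightarrow> T2 x y \<in> M"
  unfolding T1_def T2_def using a_in_M c_in_M d_in_M
  by (simp_all add: subfield_add[OF subfield_M] subfield_mult[OF subfield_M] subfield_power[OF subfield_M])

lemma T_coordinates: "x \<in> M \<Longrightarrow> y \<in> M \<Longrightarrow> T (x + y * \<theta>) = T1 x y + T2 x y * \<theta>"
  unfolding T_def by (simp add: coordinates_unique)

lemma T_add: "T (u + v) = T u + T v"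
proof -
  have "u + v = (xc u + xc v) + (yc u + yc v) * \<theta>"
    using coordinates_eq[of u] coordinates_eq[of v] by (simp add: algebra_simps)
  then have "T (u + v) = T1 (xc u + xc v) (yc u + yc v) + T2 (xc u + xc v) (yc u + yc v) * \<theta>"
    using T_coordinates xc_in_M yc_in_M subfield_add[OF subfield_M] by metis
  then show ?thesis
    unfolding T_def T1_def T2_def by (simp add: power_q_add power_r_add algebra_simps)
qed

lemma T_scale:
  assumes "f \<in> F"
  shows "T (f * u) = f * T u"
proof -
  have "f \<in> M"
    using assms F_subset_M by auto
  then have "T (f * u) = T1 (f * xc u) (f * yc u) + T2 (f * xc u) (f * yc u) * \<theta>"
    using mult_coordinates T_coordinates xc_in_M yc_in_M subfield_mult[OF subfield_M] by metis
  then show ?thesis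
    unfolding T_def T1_def T2_def
    using power_q_F[OF assms] power_r_F[OF assms] by (simp add: power_mult_distrib algebra_simps)
qed

lemma c_power_q: "c ^ q = s - a * a + t * a"
  and d_power_q: "d ^ q = t - a"
  unfolding c_def d_def using a_in_M t_in_F s_in_F F_subset_M
  by (auto intro!: power_r_q subfield_add[OF subfield_M] subfield_diff[OF subfield_M]
      subfield_mult[OF subfield_M])

lemma c_add_d_square: "c + d * d = t * d + s"
proof -
  have "c + d * d = (s - a * a + t * a + (t - a) * (t - a)) ^ r"
    unfolding c_def d_def power_r_add by (simp add: power_mult_distrib)
  also have "s - a * a + t * a + (t - a) * (t - a) = t * (t - a) + s"
    by (simp add: algebra_simps)
  also have "(t * (t - a) + s) ^ r = t * d + s"
    unfolding power_r_add d_def using power_r_F t_in_F s_in_F by (simp add: power_mult_distrib)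
  finally show ?thesis .
qed

lemma T1_square:
  assumes "x \<in> M" "y \<in> M"
  shows "T1 (T1 x y) (T2 x y) = t * T1 x y + s * x"
proof -
  have "(T2 x y) ^ q = (s - a * a + t * a) * x + (t - a) * y ^ q"
    unfolding T2_def power_q_add power_mult_distrib c_power_q d_power_q power_r_q[OF assms(1)] ..
  then show ?thesis
    unfolding T1_def[of "T1 x y"] by (simp add: T1_def algebra_simps)
qed

lemma T2_square:
  assumes "x \<in> M" "y \<in> M"
  shows "T2 (T1 x y) (T2 x y) = t * T2 x y + s * y"
proof -
  have "(T1 x y) ^ r = a ^ r * x ^ r + y"
    unfolding T1_def power_r_add power_mult_distrib power_q_r[OF assms(2)] ..
  then have "T2 (T1 x y) (T2 x y) = (c * a ^ r + d * c) * x ^ r + (c + d * d) * y"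
    unfolding T2_def[of "T1 x y"] by (simp add: T2_def algebra_simps)
  also have "c * a ^ r + d * c = t * c"
    unfolding d_def power_r_diff power_r_F[OF t_in_F] by (simp add: algebra_simps)
  finally show ?thesis
    unfolding c_add_d_square T2_def by (simp add: algebra_simps)
qed

lemma T_square: "T (T u) = t * T u + s * u"
proof -
  have "T (T u) = T1 (T1 (xc u) (yc u)) (T2 (xc u) (yc u))
      + T2 (T1 (xc u) (yc u)) (T2 (xc u) (yc u)) * \<theta>"
    unfolding T_def[of u] using T_coordinates T1_in_M T2_in_M xc_in_M yc_in_M by metis
  also have "\<dots> = t * T u + s * (xc u + yc u * \<theta>)"
    unfolding T1_square[OF xc_in_M yc_in_M] T2_square[OF xc_in_M yc_in_M] T_def
    by (simp add: algebra_simps)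
  finally show ?thesis
    using coordinates_eq[of u] by simp
qed

text \<open>An eigenvalue m would satisfy y^q = (m - a) x and c x^r = (m - d) y; eliminating y and applying
  x \<mapsto> x^q gives m^(q+1) - a m^q + (a - t) m = s, which the choice of a excludes.\<close>
lemma T_no_eigenvector:
  assumes m: "m \<in> M" and "u \<noteq> 0"
  shows "T u \<noteq> m * u"
proof
  assume eq: "T u = m * u"
  define x where "x = xc u"
  define y where "y = yc u"
  have x: "x \<in> M" and y: "y \<in> M"
    unfolding x_def y_def by (simp_all add: xc_in_M yc_in_M)
  have "T1 x y + T2 x y * \<theta> = (m * x) + (m * y) * \<theta>"
    using eq mult_coordinates[of m u] unfolding T_def x_def y_def by simp
  then have "T1 x y = m * x" and "T2 x y = m * y"
    using coordinates_unique T1_in_M[OF x y] T2_in_M[OF x y] x y m subfield_mult[OF subfield_M]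
    by metis+
  then have yq: "y ^ q = (m - a) * x" and x_eq: "c * x ^ r = (m - d) * y"
    unfolding T1_def T2_def by (simp_all add: algebra_simps)
  have y_eq: "y = (m - a) ^ r * x ^ r"
    using power_q_r[OF y] unfolding yq by (simp add: power_mult_distrib)
  have "x \<noteq> 0"
  proof
    assume "x = 0"
    moreover have "r > 0"
      by (simp add: r_def) (metis card_F card_gt_0_iff finite subfield_zero[OF subfield_F] empty_iff)
    ultimately have "y = 0"
      using y_eq by simp
    then show False
      using \<open>x = 0\<close> \<open>u \<noteq> 0\<close> coordinates_eq[of u] unfolding x_def y_def by simp
  qed
  have "c * x ^ r = ((m - d) * (m - a) ^ r) * x ^ r"
    unfolding x_eq y_eq by (simp add: algebra_simps)
  then have "c = (m - d) * (m - a) ^ r"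
    using \<open>x \<noteq> 0\<close> by simp
  then have "c ^ q = (m ^ q - d ^ q) * ((m - a) ^ r) ^ q"
    by (simp add: power_mult_distrib power_q_diff)
  then have "s - a * a + t * a = (m ^ q - (t - a)) * (m - a)"
    unfolding c_power_q d_power_q
    using power_r_q m a_in_M subfield_diff[OF subfield_M] by metis
  then have "m * m ^ q - a * m ^ q + (a - t) * m = s"
    by (simp add: algebra_simps)
  then show False
    using a_no_solution[OF m] by blast
qed

lemma quadratic_operator: "quadratic_operator F M T t s"
  by unfold_locales
    (use subfield_F subfield_M F_subset_M t_in_F s_in_F irreducible T_add T_scale T_square
      T_no_eigenvector in auto)

end

text \<open>The construction works for every n > 1.\<close>
theorem mainTheorem10:
  fixes F M :: "'a::{field,finite} set" and q n :: nat
  assumes "is_subfield F" and "is_subfield M" and "F \<subseteq> M"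
    and "card F = q" and "card M = q ^ n" and "card (UNIV :: 'a set) = q ^ (2 * n)"
    and "n > 1" and "even n"
  shows "\<exists>S. line_spread F S \<and> (\<forall>l\<in>S. scattered_line F M l)"
proof -
  obtain t s where ts: "t \<in> F" "s \<in> F" "\<forall>b\<in>F. b * b - t * b - s \<noteq> 0"
    using exists_irreducible_quadratic[OF assms(1) finite] by blast
  then obtain a where a: "a \<in> M" "\<forall>X\<in>M. X * X ^ q - a * X ^ q + (a - t) * X \<noteq> s"
    using exists_parameter_without_solution[OF assms(1-3)] assms(4) by blast
  have "card M < card (UNIV :: 'a set)"
    using assms(4-7) two_le_card_subfield[OF assms(1) finite] by (simp add: power_strict_increasing)
  then obtain \<theta> :: 'a where "\<theta> \<notin> M"
    by (metis UNIV_I card_mono finite not_le subsetI)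
  moreover have "card (UNIV :: 'a set) = card M * card M"
    using assms(5,6) by (simp add: mult_2 power_add)
  ultimately have "bij_betw (\<lambda>(x, y). x + y * \<theta>) (M \<times> M) UNIV"
    by (rule bij_betw_coordinates[OF assms(2)])
  then interpret scattered_construction F M q n t s a \<theta>
    using assms ts a by unfold_locales auto
  show ?thesis
    by (rule quadratic_operator.exists_scattered_line_spread[OF quadratic_operator])
qed

end
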